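(* Let $(W,S)$ be a finitely generated Coxeter system and $u<v$ in $W$. The number of elements $u'$ covering $u$ in the interval $[u,v]$ equals $|\mathrm{Des}(v^{S(u)})|$.
   Context: $(W,S)$ is a finitely generated Coxeter system with length function $\ell$. For $w\in W$, $S(w)\subseteq S$ is the set of simple reflections appearing in a (any) reduced expression of $w$, and $\mathrm{Des}(w)=\{s\in S:\ell(ws)<\ell(w)\}$. For $I\subseteq S$, $W_I$ is the parabolic subgroup generated by $I$, $X_I=\{u\in W:\ell(us)>\ell(u)\ \forall s\in I\}$, and every $w\in W$ factors uniquely as $w=w^Iw_I$ with $w^I\in X_I$, $w_I\in W_I$ (parabolic components along $I$). The partial order on $W$: $u\le v$ iff $v_{S(u)}=u$. *)

theory Defs
  imports "HOL-Algebra.Multiplicative_Group"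
begin

definition word_eval :: "('a, 'b) monoid_scheme \<Rightarrow> 'a list \<Rightarrow> 'a" where
  "word_eval G xs = foldr (\<lambda>x y. x \<otimes>\<^bsub>G\<^esub> y) xs \<one>\<^bsub>G\<^esub>"

text \<open>Coxeter relators: the words (s t)^m(s,t) with m(s,t) = ord(st) finite
  (for s = t this is the word s s).\<close>
definition coxeter_relators :: "('a, 'b) monoid_scheme \<Rightarrow> 'a set \<Rightarrow> 'a list set" where
  "coxeter_relators G S =
     {concat (replicate (group.ord G (s \<otimes>\<^bsub>G\<^esub> t)) [s, t]) | s t.
        s \<in> S \<and> t \<in> S \<and> group.ord G (s \<otimes>\<^bsub>G\<^esub> t) \<noteq> 0}"

inductive word_cong :: "'a list set \<Rightarrow> 'a list \<Rightarrow> 'a list \<Rightarrow> bool" for R where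
  wc_refl: "word_cong R xs xs"
| wc_sym: "word_cong R xs ys \<Longrightarrow> word_cong R ys xs"
| wc_trans: "word_cong R xs ys \<Longrightarrow> word_cong R ys zs \<Longrightarrow> word_cong R xs zs"
| wc_rel: "r \<in> R \<Longrightarrow> word_cong R (xs @ r @ ys) (xs @ ys)"

text \<open>(G,S) is a Coxeter system: G is generated by the set S of involutions and
  has the presentation <S | (st)^m(s,t) = 1>, i.e. every word over S representing
  the identity is a consequence of the Coxeter relators.\<close>
definition coxeter_system :: "('a, 'b) monoid_scheme \<Rightarrow> 'a set \<Rightarrow> bool" where
  "coxeter_system G S \<longleftrightarrow> group G \<and> S \<subseteq> carrier G
     \<and> (\<forall>s\<in>S. s \<noteq> \<one>\<^bsub>G\<^esub> \<and> s \<otimes>\<^bsub>G\<^esub> s = \<one>\<^bsub>G\<^esub>)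
     \<and> carrier G = word_eval G ` lists S
     \<and> (\<forall>xs \<in> lists S. word_eval G xs = \<one>\<^bsub>G\<^esub> \<longrightarrow> word_cong (coxeter_relators G S) xs [])"

definition cox_length :: "('a, 'b) monoid_scheme \<Rightarrow> 'a set \<Rightarrow> 'a \<Rightarrow> nat" where
  "cox_length G S w = (LEAST n. \<exists>xs \<in> lists S. length xs = n \<and> word_eval G xs = w)"

definition reduced_word :: "('a, 'b) monoid_scheme \<Rightarrow> 'a set \<Rightarrow> 'a list \<Rightarrow> 'a \<Rightarrow> bool" where
  "reduced_word G S xs w \<longleftrightarrow> xs \<in> lists S \<and> word_eval G xs = w \<and> length xs = cox_length G S w"

definition cox_support :: "('a, 'b) monoid_scheme \<Rightarrow> 'a set \<Rightarrow> 'a \<Rightarrow> 'a set" where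
  "cox_support G S w = \<Union> {set xs | xs. reduced_word G S xs w}"

definition cox_descents :: "('a, 'b) monoid_scheme \<Rightarrow> 'a set \<Rightarrow> 'a \<Rightarrow> 'a set" where
  "cox_descents G S w = {s \<in> S. cox_length G S (w \<otimes>\<^bsub>G\<^esub> s) < cox_length G S w}"

definition parabolic :: "('a, 'b) monoid_scheme \<Rightarrow> 'a set \<Rightarrow> 'a set" where
  "parabolic G I = word_eval G ` lists I"

definition min_reps :: "('a, 'b) monoid_scheme \<Rightarrow> 'a set \<Rightarrow> 'a set \<Rightarrow> 'a set" where
  "min_reps G S I = {u \<in> carrier G. \<forall>s\<in>I. cox_length G S (u \<otimes>\<^bsub>G\<^esub> s) > cox_length G S u}"

text \<open>Parabolic components: w = w^I w_I with w^I in X_I and w_I in W_I.\<close>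
definition par_comp :: "('a, 'b) monoid_scheme \<Rightarrow> 'a set \<Rightarrow> 'a set \<Rightarrow> 'a \<Rightarrow> 'a" where
  "par_comp G S I w = (THE y. y \<in> parabolic G I \<and>
      w \<otimes>\<^bsub>G\<^esub> inv\<^bsub>G\<^esub> y \<in> min_reps G S I)"

definition par_quot :: "('a, 'b) monoid_scheme \<Rightarrow> 'a set \<Rightarrow> 'a set \<Rightarrow> 'a \<Rightarrow> 'a" where
  "par_quot G S I w = w \<otimes>\<^bsub>G\<^esub> inv\<^bsub>G\<^esub> (par_comp G S I w)"

definition cox_le :: "('a, 'b) monoid_scheme \<Rightarrow> 'a set \<Rightarrow> 'a \<Rightarrow> 'a \<Rightarrow> bool" where
  "cox_le G S u v \<longleftrightarrow> u \<in> carrier G \<and> v \<in> carrier G \<and> par_comp G S (cox_support G S u) v = u"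

definition cox_less :: "('a, 'b) monoid_scheme \<Rightarrow> 'a set \<Rightarrow> 'a \<Rightarrow> 'a \<Rightarrow> bool" where
  "cox_less G S u v \<longleftrightarrow> cox_le G S u v \<and> u \<noteq> v"

definition cox_interval :: "('a, 'b) monoid_scheme \<Rightarrow> 'a set \<Rightarrow> 'a \<Rightarrow> 'a \<Rightarrow> 'a set" where
  "cox_interval G S u v = {x. cox_le G S u x \<and> cox_le G S x v}"

definition cox_covers :: "('a, 'b) monoid_scheme \<Rightarrow> 'a set \<Rightarrow> 'a \<Rightarrow> 'a \<Rightarrow> bool" where
  "cox_covers G S x y \<longleftrightarrow> cox_less G S x y \<and> \<not> (\<exists>z. cox_less G S x z \<and> cox_less G S z y)"

end

theory Submission
  imports Defs
begin

text \<open>Following Tits, a word \<open>s\<^sub>1 \<cdots> s\<^sub>n\<close> is assigned the sequence of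
  reflections \<open>t\<^sub>i = s\<^sub>1 \<cdots> s\<^sub>i \<cdots> s\<^sub>1\<close> that it crosses.
  Inserting a Coxeter relator changes every multiplicity in this sequence by an even
  number, so words of equal value have lengths of equal parity and cross the same
  reflections an odd number of times. This gives the exchange condition, and with it
  the factorization \<open>w = w\<^sup>I w\<^sub>I\<close> with additive lengths.

  For \<open>u \<le> v\<close> and \<open>I = S(u)\<close> we have \<open>u = v\<^sub>I\<close>, and every \<open>z\<close> in \<open>[u, v]\<close> equals
  \<open>v\<^bsub>S(z)\<^esub>\<close> with \<open>I \<subseteq> S(z)\<close>. A descent \<open>s\<close> of \<open>v\<^sup>I\<close> lies outside \<open>I\<close> and
  \<open>S(v\<^bsub>I \<union> {s}\<^esub>) = I \<union> {s}\<close>, so \<open>v\<^bsub>I \<union> {s}\<^esub>\<close> covers \<open>u\<close>. Conversely, if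
  \<open>u'\<close> covers \<open>u\<close>, a descent \<open>s\<close> of \<open>u'\<^sup>I\<close> is a descent of \<open>v\<^sup>I\<close> as well,
  and \<open>u \<le> v\<^bsub>I \<union> {s}\<^esub> \<le> u'\<close> forces \<open>u' = v\<^bsub>I \<union> {s}\<^esub>\<close>. Distinct descents give
  covers of distinct support.\<close>

primrec reflection_seq :: "('a, 'b) monoid_scheme \<Rightarrow> 'a list \<Rightarrow> 'a list" where
  "reflection_seq G [] = []"
| "reflection_seq G (s # xs) = s # map (\<lambda>t. s \<otimes>\<^bsub>G\<^esub> t \<otimes>\<^bsub>G\<^esub> s) (reflection_seq G xs)"

lemma length_reflection_seq [simp]: "length (reflection_seq G xs) = length xs"
  by (induction xs) auto

lemma count_list_distinct:
  "distinct xs \<Longrightarrow> count_list xs x = (if x \<in> set xs then 1 else 0)"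
  by (induction xs) auto

locale coxeter = group G for G :: "('a, 'b) monoid_scheme" (structure) +
  fixes S :: "'a set"
  assumes gens_closed: "S \<subseteq> carrier G"
    and gen_ne_one: "s \<in> S \<Longrightarrow> s \<noteq> \<one>"
    and gen_square: "s \<in> S \<Longrightarrow> s \<otimes> s = \<one>"
    and generated: "carrier G = word_eval G ` lists S"
    and presentation:
      "xs \<in> lists S \<Longrightarrow> word_eval G xs = \<one> \<Longrightarrow> word_cong (coxeter_relators G S) xs []"

lemma coxeter_system_imp_coxeter: "coxeter_system G S \<Longrightarrow> coxeter G S"
  unfolding coxeter_system_def coxeter_def coxeter_axioms_def by blast

context coxeter
begin

abbreviation ev where "ev \<equiv> word_eval G"
abbreviation len where "len \<equiv> cox_length G S"
abbreviation supp where "supp \<equiv> cox_support G S"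
abbreviation par where "par J \<equiv> parabolic G J"
abbreviation X where "X J \<equiv> min_reps G S J"
abbreviation pcomp where "pcomp \<equiv> par_comp G S"
abbreviation pquot where "pquot \<equiv> par_quot G S"
abbreviation le where "le \<equiv> cox_le G S"
abbreviation lt where "lt \<equiv> cox_less G S"

lemma gen_closed [simp]: "s \<in> S \<Longrightarrow> s \<in> carrier G"
  using gens_closed by auto

lemma inv_gen [simp]: "s \<in> S \<Longrightarrow> inv s = s"
  using gen_square by (simp add: inv_equality)

lemma gen_cancel_left [simp]: "s \<in> S \<Longrightarrow> y \<in> carrier G \<Longrightarrow> s \<otimes> (s \<otimes> y) = y"
  by (simp add: gen_square m_assoc[symmetric])

lemma gen_cancel_right [simp]: "s \<in> S \<Longrightarrow> y \<in> carrier G \<Longrightarrow> y \<otimes> s \<otimes> s = y"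
  by (simp add: gen_square m_assoc)

subsection \<open>Words and length\<close>

lemma word_eval_Nil [simp]: "ev [] = \<one>"
  by (simp add: word_eval_def)

lemma word_eval_Cons [simp]: "ev (x # xs) = x \<otimes> ev xs"
  by (simp add: word_eval_def)

lemma word_eval_closed [simp]: "xs \<in> lists S \<Longrightarrow> ev xs \<in> carrier G"
  by (induction xs) auto

lemma word_eval_append:
  "xs \<in> lists S \<Longrightarrow> ys \<in> lists S \<Longrightarrow> ev (xs @ ys) = ev xs \<otimes> ev ys"
  by (induction xs) (auto simp: m_assoc)

lemma word_eval_snoc: "xs \<in> lists S \<Longrightarrow> s \<in> S \<Longrightarrow> ev (xs @ [s]) = ev xs \<otimes> s"
  by (simp add: word_eval_append)

lemma word_eval_rev: "xs \<in> lists S \<Longrightarrow> ev (rev xs) = inv (ev xs)"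
proof (induction xs)
  case (Cons x xs)
  then have "rev xs \<in> lists S" "x \<in> S" by auto
  then show ?case using Cons by (simp add: word_eval_snoc inv_mult_group)
qed simp

lemma length_le_word: "xs \<in> lists S \<Longrightarrow> len (ev xs) \<le> length xs"
  unfolding cox_length_def by (rule Least_le) blast

lemma reduced_word_iff:
  "reduced_word G S xs w \<longleftrightarrow> xs \<in> lists S \<and> ev xs = w \<and> length xs = len w"
  by (simp add: reduced_word_def)

lemma reduced_word_exists: "w \<in> carrier G \<Longrightarrow> \<exists>xs. reduced_word G S xs w"
proof -
  assume "w \<in> carrier G"
  then obtain xs where "xs \<in> lists S" "ev xs = w" using generated by auto
  then have "\<exists>n. \<exists>xs\<in>lists S. length xs = n \<and> ev xs = w" by blast
  then have "\<exists>xs\<in>lists S. length xs = len w \<and> ev xs = w"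
    unfolding cox_length_def by (rule LeastI_ex)
  then show ?thesis unfolding reduced_word_iff by blast
qed

lemma length_one [simp]: "len \<one> = 0"
  using length_le_word[of "[]"] by simp

lemma length_eq_0_iff: "w \<in> carrier G \<Longrightarrow> len w = 0 \<longleftrightarrow> w = \<one>"
  using reduced_word_exists[of w] by (auto simp: reduced_word_iff)

lemma length_mult_le:
  assumes a: "a \<in> carrier G" and b: "b \<in> carrier G"
  shows "len (a \<otimes> b) \<le> len a + len b"
proof -
  obtain xs ys where xs: "reduced_word G S xs a" and ys: "reduced_word G S ys b"
    using reduced_word_exists a b by blast
  then have "xs @ ys \<in> lists S" "ev (xs @ ys) = a \<otimes> b"
    by (auto simp: reduced_word_iff word_eval_append)
  then show ?thesis
    using length_le_word[of "xs @ ys"] xs ys by (simp add: reduced_word_iff)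
qed

lemma length_gen: "s \<in> S \<Longrightarrow> len s = 1"
  using length_le_word[of "[s]"] length_eq_0_iff[of s] gen_ne_one[of s] by fastforce

lemma length_mult_gen_le: "w \<in> carrier G \<Longrightarrow> s \<in> S \<Longrightarrow> len (w \<otimes> s) \<le> len w + 1"
  using length_mult_le[of w s] length_gen by simp

lemma reduced_word_butlast:
  assumes "xs @ [s] \<in> lists S" and "length (xs @ [s]) = len (ev (xs @ [s]))"
  shows "length xs = len (ev xs)"
proof -
  have "xs \<in> lists S" "s \<in> S" using assms(1) by auto
  then show ?thesis
    using assms(2) length_le_word[of xs] length_mult_gen_le[of "ev xs" s]
    by (simp add: word_eval_snoc)
qed

subsection \<open>Reflection sequences and the exchange condition\<close>

definition conjugate :: "'a \<Rightarrow> 'a \<Rightarrow> 'a" where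
  "conjugate g t = g \<otimes> t \<otimes> inv g"

lemma reflection_seq_closed: "xs \<in> lists S \<Longrightarrow> set (reflection_seq G xs) \<subseteq> carrier G"
  by (induction xs) auto

lemma map_conjugate_one: "set ts \<subseteq> carrier G \<Longrightarrow> map (conjugate \<one>) ts = ts"
  by (induction ts) (auto simp: conjugate_def)

lemma reflection_seq_append:
  "xs \<in> lists S \<Longrightarrow> ys \<in> lists S \<Longrightarrow>
     reflection_seq G (xs @ ys) = reflection_seq G xs @ map (conjugate (ev xs)) (reflection_seq G ys)"
proof (induction xs)
  case Nil
  then show ?case using map_conjugate_one[OF reflection_seq_closed] by simp
next
  case (Cons x xs)
  then have x: "x \<in> S" and xs: "xs \<in> lists S" by auto
  have "map ((\<lambda>t. x \<otimes> t \<otimes> x) \<circ> conjugate (ev xs)) (reflection_seq G ys)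
      = map (conjugate (ev (x # xs))) (reflection_seq G ys)"
  proof (rule map_cong[OF refl])
    fix t assume "t \<in> set (reflection_seq G ys)"
    then have "t \<in> carrier G" using reflection_seq_closed[OF Cons.prems(2)] by blast
    then show "((\<lambda>t. x \<otimes> t \<otimes> x) \<circ> conjugate (ev xs)) t = conjugate (ev (x # xs)) t"
      using x xs by (simp add: conjugate_def m_assoc inv_mult_group)
  qed
  then show ?case using Cons by simp
qed

lemma reflection_seq_relator:
  assumes s: "s \<in> S" and t: "t \<in> S"
  shows "reflection_seq G (concat (replicate k [s, t])) = map (\<lambda>i. (s \<otimes> t) [^] i \<otimes> s) [0..<2 * k]"
proof (induction k)
  case (Suc k)
  have st: "s \<otimes> t \<in> carrier G" using s t by simp
  have "s \<otimes> (t \<otimes> ((s \<otimes> t) [^] i \<otimes> s) \<otimes> t) \<otimes> s = (s \<otimes> t) [^] Suc (Suc i) \<otimes> s" for i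
  proof -
    have "(s \<otimes> t) [^] Suc (Suc i) = (s \<otimes> t) \<otimes> ((s \<otimes> t) [^] i \<otimes> (s \<otimes> t))"
      using nat_pow_Suc2[OF st, of "Suc i"] by simp
    then show ?thesis using s t st by (simp add: m_assoc)
  qed
  moreover have "[0..<2 * Suc k] = 0 # 1 # map (\<lambda>i. i + 2) [0..<2 * k]"
    using map_add_upt[of 2 "2 * k"]
    by (simp add: upt_conv_Cons add.commute numeral_2_eq_2 del: upt_Suc)
  ultimately show ?case using Suc s t by (simp add: m_assoc del: upt_Suc)
qed simp

lemma word_eval_relator:
  "s \<in> S \<Longrightarrow> t \<in> S \<Longrightarrow> ev (concat (replicate k [s, t])) = (s \<otimes> t) [^] k"
proof (induction k)
  case (Suc k)
  then have "(s \<otimes> t) [^] Suc k = (s \<otimes> t) \<otimes> (s \<otimes> t) [^] k"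
    by (intro nat_pow_Suc2) simp
  then show ?case using Suc by (simp add: m_assoc)
qed simp

lemma count_list_periodic:
  assumes "\<And>i. f (i + m) = f i"
  shows "count_list (map f [0..<2 * m]) x = 2 * count_list (map f [0..<m]) x"
proof -
  have "[0..<m + m] = [0..<m] @ [m..<m + m]"
    by (rule upt_add_eq_append) simp
  moreover have "[m..<m + m] = map (\<lambda>i. i + m) [0..<m]"
    using map_add_upt[of m m] by simp
  ultimately have "map f [0..<2 * m] = map f [0..<m] @ map f [0..<m]"
    using assms by (simp add: mult_2 comp_def)
  then show ?thesis by simp
qed

lemma relator_props:
  assumes "r \<in> coxeter_relators G S"
  shows "r \<in> lists S" "even (length r)" "ev r = \<one>"
    "\<And>g x. even (count_list (map g (reflection_seq G r)) x)"
proof -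
  obtain s t where st: "s \<in> S" "t \<in> S" and ord_ne: "ord (s \<otimes> t) \<noteq> 0"
    and r: "r = concat (replicate (ord (s \<otimes> t)) [s, t])"
    using assms unfolding coxeter_relators_def by blast
  define m where "m = ord (s \<otimes> t)"
  have c: "s \<otimes> t \<in> carrier G" using st by simp
  show "r \<in> lists S" using r st ord_ne by auto
  have "length (concat (replicate k [s, t])) = 2 * k" for k
    by (induction k) auto
  then show "even (length r)" using r by simp
  show "ev r = \<one>" using r word_eval_relator[OF st] c by simp
  fix g x
  have "(s \<otimes> t) [^] (i + m) = (s \<otimes> t) [^] i" for i
    using c m_def by (simp add: nat_pow_mult[symmetric])
  then show "even (count_list (map g (reflection_seq G r)) x)"
    using count_list_periodic[of "\<lambda>i. g ((s \<otimes> t) [^] i \<otimes> s)" m x]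
    by (simp add: r reflection_seq_relator[OF st] m_def map_map comp_def)
qed

lemma word_cong_parity:
  "word_cong (coxeter_relators G S) xs ys \<Longrightarrow> (xs \<in> lists S \<longleftrightarrow> ys \<in> lists S) \<and>
     (xs \<in> lists S \<longrightarrow> even (length xs + length ys) \<and>
       (\<forall>t. even (count_list (reflection_seq G xs) t + count_list (reflection_seq G ys) t)))"
proof (induction rule: word_cong.induct)
  case (wc_sym xs ys)
  then show ?case by (auto simp: add.commute)
next
  case (wc_trans xs ys zs)
  then show ?case by (metis even_add)
next
  case (wc_rel r xs ys)
  note r = relator_props[OF wc_rel]
  have "even (count_list (reflection_seq G (xs @ r @ ys)) t
          + count_list (reflection_seq G (xs @ ys)) t)"
    if xs: "xs \<in> lists S" and ys: "ys \<in> lists S" for t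
  proof -
    have "reflection_seq G (r @ ys) = reflection_seq G r @ reflection_seq G ys"
      using reflection_seq_append[OF r(1) ys] r(3) map_conjugate_one[OF reflection_seq_closed[OF ys]]
      by simp
    then show ?thesis
      using reflection_seq_append[OF xs, of "r @ ys"] reflection_seq_append[OF xs ys]
        r(1) r(4)[of "conjugate (ev xs)" t] ys by simp
  qed
  then show ?case using r(1,2) by auto
qed simp

lemma parity_of_equal_words:
  assumes xs: "xs \<in> lists S" and ys: "ys \<in> lists S" and eq: "ev xs = ev ys"
  shows "even (length xs + length ys)"
    "\<And>t. even (count_list (reflection_seq G xs) t + count_list (reflection_seq G ys) t)"
proof -
  have rys: "rev ys \<in> lists S" and zs: "xs @ rev ys \<in> lists S" "ys @ rev ys \<in> lists S"
    using xs ys by auto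
  have "ev (xs @ rev ys) = \<one>" "ev (ys @ rev ys) = \<one>"
    using word_eval_append[OF xs rys] word_eval_append[OF ys rys] word_eval_rev[OF ys] eq ys
    by simp_all
  then have "word_cong (coxeter_relators G S) (xs @ rev ys) []"
    "word_cong (coxeter_relators G S) (ys @ rev ys) []"
    using presentation zs by auto
  note parity = this[THEN word_cong_parity]
  show "even (length xs + length ys)" using parity(1) zs by simp
  fix t
  have "even (count_list (reflection_seq G (xs @ rev ys)) t)"
    "even (count_list (reflection_seq G (ys @ rev ys)) t)"
    using parity zs by auto
  then show "even (count_list (reflection_seq G xs) t + count_list (reflection_seq G ys) t)"
    unfolding reflection_seq_append[OF xs rys] reflection_seq_append[OF ys rys] eq by simp
qed

lemma reflection_seq_deletion:
  "xs \<in> lists S \<Longrightarrow> t \<in> set (reflection_seq G xs) \<Longrightarrow>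
     \<exists>a c b. xs = a @ c # b \<and> ev (a @ b) = t \<otimes> ev xs"
proof (induction xs arbitrary: t)
  case (Cons x xs)
  then have x: "x \<in> S" and xs: "xs \<in> lists S" by auto
  show ?case
  proof (cases "t = x")
    case True
    then show ?thesis using x xs by (intro exI[of _ "[]"]) (auto simp: m_assoc[symmetric])
  next
    case False
    then obtain t' where t': "t' \<in> set (reflection_seq G xs)" "t = x \<otimes> t' \<otimes> x"
      using Cons.prems by auto
    obtain a c b where abc: "xs = a @ c # b" "ev (a @ b) = t' \<otimes> ev xs"
      using Cons.IH[OF xs t'(1)] by blast
    have "t' \<in> carrier G" using t'(1) reflection_seq_closed[OF xs] by blast
    then have "ev ((x # a) @ b) = t \<otimes> ev (x # xs)"
      using abc t' x xs by (simp add: m_assoc)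
    then show ?thesis using abc by (intro exI[of _ "x # a"]) auto
  qed
qed simp

lemma distinct_reflection_seq:
  "xs \<in> lists S \<Longrightarrow> length xs = len (ev xs) \<Longrightarrow> distinct (reflection_seq G xs)"
proof (induction xs)
  case (Cons x xs)
  then have x: "x \<in> S" and xs: "xs \<in> lists S" by auto
  have reduced: "length xs = len (ev xs)"
    using Cons.prems(2) length_mult_le[of x "ev xs"] length_gen[OF x] length_le_word[OF xs] x xs
    by simp
  have closed: "set (reflection_seq G xs) \<subseteq> carrier G" using reflection_seq_closed[OF xs] .
  have x_notin: "x \<notin> set (reflection_seq G xs)"
  proof
    assume "x \<in> set (reflection_seq G xs)"
    then obtain a c b where abc: "xs = a @ c # b" "ev (a @ b) = x \<otimes> ev xs"
      using reflection_seq_deletion[OF xs] by blast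
    then have "len (ev (x # xs)) \<le> length (a @ b)"
      using length_le_word[of "a @ b"] xs by auto
    then show False using abc Cons.prems(2) by simp
  qed
  have "inj_on (\<lambda>t. x \<otimes> t \<otimes> x) (set (reflection_seq G xs))"
  proof (rule inj_onI)
    fix a b assume "a \<in> set (reflection_seq G xs)" "b \<in> set (reflection_seq G xs)"
      and "x \<otimes> a \<otimes> x = x \<otimes> b \<otimes> x"
    then show "a = b" using closed x by (simp add: subset_iff)
  qed
  moreover have "x \<notin> (\<lambda>t. x \<otimes> t \<otimes> x) ` set (reflection_seq G xs)"
  proof
    assume "x \<in> (\<lambda>t. x \<otimes> t \<otimes> x) ` set (reflection_seq G xs)"
    then obtain t where t: "t \<in> set (reflection_seq G xs)" and eq: "x = x \<otimes> t \<otimes> x" by blast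
    have t_closed: "t \<in> carrier G" using t closed by blast
    have "x \<otimes> t \<otimes> x = x \<otimes> x \<otimes> x" using eq x by (simp add: gen_square)
    then have "x \<otimes> t = \<one>" using t_closed x by simp
    then have "t = x" using t_closed x by (metis gen_cancel_left gen_closed r_one)
    then show False using t x_notin by simp
  qed
  ultimately show ?case using Cons.IH[OF xs reduced] by (simp add: distinct_map)
qed simp

lemma length_mult_gen:
  assumes w: "w \<in> carrier G" and s: "s \<in> S"
  shows "len (w \<otimes> s) = len w + 1 \<or> len w = len (w \<otimes> s) + 1"
proof -
  have ws: "w \<otimes> s \<in> carrier G" using w s by simp
  obtain xs where xs: "reduced_word G S xs w" using reduced_word_exists[OF w] ..
  obtain zs where zs: "reduced_word G S zs (w \<otimes> s)" using reduced_word_exists[OF ws] ..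
  have "xs @ [s] \<in> lists S" "zs \<in> lists S" "ev (xs @ [s]) = ev zs"
    using xs zs s by (auto simp: reduced_word_iff word_eval_snoc)
  then have "even (length (xs @ [s]) + length zs)" by (rule parity_of_equal_words(1))
  then have "even (len w + 1 + len (w \<otimes> s))" using xs zs by (simp add: reduced_word_iff)
  moreover have "len (w \<otimes> s) \<le> len w + 1" using length_mult_gen_le[OF w s] .
  moreover have "len w \<le> len (w \<otimes> s) + 1"
    using length_mult_gen_le[of "w \<otimes> s" s] w s by simp
  ultimately show ?thesis by (cases "len (w \<otimes> s) = len w") auto
qed

text \<open>If \<open>t = x s x\<^sup>-\<^sup>1\<close>, with \<open>x = ev xs\<close>, does not occur in the reflection sequence
  of the reduced word \<open>xs\<close>, then the reflection sequence of \<open>xs @ [s]\<close> is distinct. So is the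
  one of a reduced word for \<open>x s\<close>, and the parity invariant gives both the same entries;
  hence \<open>xs @ [s]\<close> is reduced.\<close>

lemma exchange_condition:
  assumes xs: "xs \<in> lists S" and reduced: "length xs = len (ev xs)" and s: "s \<in> S"
    and descent: "len (ev xs \<otimes> s) < len (ev xs)"
  shows "\<exists>a c b. xs = a @ c # b \<and> ev (a @ b) = ev xs \<otimes> s"
proof -
  define x where "x = ev xs"
  have x_closed: "x \<in> carrier G" using xs x_def by simp
  define t where "t = conjugate x s"
  show ?thesis
  proof (cases "t \<in> set (reflection_seq G xs)")
    case True
    then obtain a c b where "xs = a @ c # b" "ev (a @ b) = t \<otimes> ev xs"
      using reflection_seq_deletion[OF xs] by blast
    moreover have "t \<otimes> x = x \<otimes> s" using x_closed s by (simp add: t_def conjugate_def m_assoc)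
    ultimately show ?thesis using x_def by auto
  next
    case False
    define ys where "ys = xs @ [s]"
    have ys: "ys \<in> lists S" "ev ys = x \<otimes> s" using xs s word_eval_snoc by (auto simp: ys_def x_def)
    have "reflection_seq G ys = reflection_seq G xs @ [t]"
      using reflection_seq_append[OF xs, of "[s]"] s by (simp add: ys_def t_def x_def)
    then have distinct_ys: "distinct (reflection_seq G ys)"
      using distinct_reflection_seq[OF xs reduced] False by simp
    have "x \<otimes> s \<in> carrier G" using x_closed s by simp
    then obtain zs where zs: "reduced_word G S zs (x \<otimes> s)"
      using reduced_word_exists by blast
    then have zs': "zs \<in> lists S" "ev zs = x \<otimes> s" "length zs = len (x \<otimes> s)"
      by (auto simp: reduced_word_iff)
    have distinct_zs: "distinct (reflection_seq G zs)"
      using distinct_reflection_seq[OF zs'(1)] zs' by simp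
    have "u \<in> set (reflection_seq G ys) \<longleftrightarrow> u \<in> set (reflection_seq G zs)" for u
      using parity_of_equal_words(2)[OF ys(1) zs'(1), of u] ys(2) zs'(2)
        count_list_distinct[OF distinct_ys, of u] count_list_distinct[OF distinct_zs, of u]
      by (auto split: if_splits)
    then have "set (reflection_seq G ys) = set (reflection_seq G zs)" by blast
    then have "length ys = length zs"
      using distinct_card[OF distinct_ys] distinct_card[OF distinct_zs] by simp
    then show ?thesis using descent zs'(3) reduced by (simp add: ys_def x_def)
  qed
qed

lemma reduced_subword_exists:
  "xs \<in> lists S \<Longrightarrow> \<exists>ys. set ys \<subseteq> set xs \<and> reduced_word G S ys (ev xs)"
proof (induction xs rule: rev_induct)
  case (snoc x xs)
  then have x: "x \<in> S" and xs: "xs \<in> lists S" by auto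
  obtain ys where ys: "set ys \<subseteq> set xs" "ys \<in> lists S" "ev ys = ev xs" "length ys = len (ev xs)"
    using snoc.IH[OF xs] by (auto simp: reduced_word_iff)
  define y where "y = ev ys"
  have y_closed: "y \<in> carrier G" unfolding y_def using ys(2) by simp
  have eval: "ev (xs @ [x]) = y \<otimes> x" using word_eval_snoc[OF xs x] ys y_def by simp
  show ?case
  proof (cases "len (y \<otimes> x) = len y + 1")
    case True
    then show ?thesis using ys x eval word_eval_snoc[OF ys(2) x] y_def
      by (intro exI[of _ "ys @ [x]"]) (auto simp: reduced_word_iff)
  next
    case False
    then have len_y: "len y = len (y \<otimes> x) + 1" using length_mult_gen[OF y_closed x] by simp
    then obtain a c b where "ys = a @ c # b" "ev (a @ b) = y \<otimes> x"
      using exchange_condition[OF ys(2) _ x] ys y_def by auto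
    then show ?thesis using len_y ys eval y_def
      by (intro exI[of _ "a @ b"]) (auto simp: reduced_word_iff)
  qed
qed (simp add: reduced_word_iff)

subsection \<open>Parabolic subgroups and supports\<close>

lemma parabolic_closed: "J \<subseteq> S \<Longrightarrow> a \<in> par J \<Longrightarrow> a \<in> carrier G"
  unfolding parabolic_def using word_eval_closed by blast

lemma one_in_parabolic: "\<one> \<in> par J"
  unfolding parabolic_def by (auto intro!: image_eqI[of _ _ "[]"])

lemma word_eval_in_parabolic: "xs \<in> lists J \<Longrightarrow> ev xs \<in> par J"
  unfolding parabolic_def by auto

lemma gen_in_parabolic: "J \<subseteq> S \<Longrightarrow> s \<in> J \<Longrightarrow> s \<in> par J"
  using word_eval_in_parabolic[of "[s]" J] by auto

lemma parabolic_mono: "J \<subseteq> K \<Longrightarrow> par J \<subseteq> par K"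
  unfolding parabolic_def by (auto intro: lists_mono[THEN subsetD])

lemma parabolic_mult:
  assumes J: "J \<subseteq> S" and a: "a \<in> par J" and b: "b \<in> par J"
  shows "a \<otimes> b \<in> par J"
proof -
  obtain xs ys where xs: "xs \<in> lists J" "a = ev xs" and ys: "ys \<in> lists J" "b = ev ys"
    using a b unfolding parabolic_def by blast
  have "xs \<in> lists S" "ys \<in> lists S" using xs ys J by auto
  then have "a \<otimes> b = ev (xs @ ys)" using xs ys by (simp add: word_eval_append)
  then show ?thesis using xs ys word_eval_in_parabolic[of "xs @ ys"] by simp
qed

lemma parabolic_inv:
  assumes J: "J \<subseteq> S" and a: "a \<in> par J"
  shows "inv a \<in> par J"
proof -
  obtain xs where xs: "xs \<in> lists J" "a = ev xs" using a unfolding parabolic_def by blast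
  have "xs \<in> lists S" using xs J by auto
  then have "inv a = ev (rev xs)" using xs by (simp add: word_eval_rev)
  moreover have "rev xs \<in> lists J" using xs by auto
  ultimately show ?thesis using word_eval_in_parabolic by metis
qed

lemma parabolic_eq_carrier: "par S = carrier G"
  using generated unfolding parabolic_def by simp

lemma reduced_word_in_parabolic:
  assumes J: "J \<subseteq> S" and w: "w \<in> par J"
  obtains ys where "set ys \<subseteq> J" "reduced_word G S ys w"
proof -
  obtain zs where "zs \<in> lists J" "w = ev zs" using w unfolding parabolic_def by blast
  moreover from this obtain ys where "set ys \<subseteq> set zs" "reduced_word G S ys (ev zs)"
    using reduced_subword_exists[of zs] J by auto
  ultimately show ?thesis using that by auto
qed

lemma gen_in_parabolic_iff:
  assumes J: "J \<subseteq> S" and s: "s \<in> S"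
  shows "s \<in> par J \<longleftrightarrow> s \<in> J"
proof
  assume "s \<in> par J"
  then obtain ys where "set ys \<subseteq> J" "reduced_word G S ys s"
    using reduced_word_in_parabolic[OF J] by blast
  moreover from this have "ys = [s]"
    using length_gen[OF s] by (auto simp: reduced_word_iff length_Suc_conv)
  ultimately show "s \<in> J" by simp
qed (rule gen_in_parabolic[OF J])

text \<open>The last letter \<open>s\<close> is a descent of \<open>w\<close>, so the exchange condition applied to a reduced
  word over \<open>J\<close> puts \<open>w s\<close>, and hence \<open>s\<close>, into \<open>W\<^sub>J\<close>.\<close>

lemma reduced_word_letters_in_parabolic:
  "J \<subseteq> S \<Longrightarrow> w \<in> par J \<Longrightarrow> reduced_word G S xs w \<Longrightarrow> set xs \<subseteq> J"
proof (induction xs arbitrary: w rule: rev_induct)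
  case (snoc s xs)
  note J = snoc.prems(1)
  have s: "s \<in> S" and xs: "xs \<in> lists S" and w: "w = ev xs \<otimes> s"
    and length_w: "length xs + 1 = len w"
    using snoc.prems word_eval_snoc[of xs s] by (auto simp: reduced_word_iff)
  have w_closed: "w \<in> carrier G" using w xs s by simp
  have reduced_xs: "length xs = len (ev xs)"
    using reduced_word_butlast[of xs s] snoc.prems(3) by (auto simp: reduced_word_iff)
  have ws: "w \<otimes> s = ev xs" using w xs s by simp
  obtain ys where ys: "set ys \<subseteq> J" "reduced_word G S ys w"
    using reduced_word_in_parabolic[OF J snoc.prems(2)] by blast
  then have ys': "ys \<in> lists S" "ev ys = w" "length ys = len w" by (auto simp: reduced_word_iff)
  have "len (w \<otimes> s) < len w" using ws reduced_xs length_w by simp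
  then obtain a c b where "ys = a @ c # b" "ev (a @ b) = w \<otimes> s"
    using exchange_condition[OF ys'(1) _ s] ys' by auto
  moreover from this have "a @ b \<in> lists J" using ys by auto
  ultimately have ws_par: "w \<otimes> s \<in> par J" using word_eval_in_parabolic by metis
  have "inv (w \<otimes> s) \<otimes> w = s" using w_closed s by (simp add: inv_mult_group m_assoc)
  then have "s \<in> par J"
    using parabolic_mult[OF J parabolic_inv[OF J ws_par] snoc.prems(2)] by simp
  then have "s \<in> J" using gen_in_parabolic_iff[OF J s] by simp
  moreover have "set xs \<subseteq> J"
    using snoc.IH[OF J, of "ev xs"] ws_par ws xs reduced_xs by (auto simp: reduced_word_iff)
  ultimately show ?case by simp
qed simp

lemma support_eq_set_reduced_word:
  assumes "reduced_word G S xs w"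
  shows "supp w = set xs"
proof -
  have "set xs \<subseteq> S" "w \<in> par (set xs)"
    using assms word_eval_in_parabolic[of xs "set xs"] by (auto simp: reduced_word_iff)
  then have "set ys \<subseteq> set xs" if "reduced_word G S ys w" for ys
    using reduced_word_letters_in_parabolic that by blast
  then show ?thesis unfolding cox_support_def using assms by blast
qed

lemma support_subset_gens: "w \<in> carrier G \<Longrightarrow> supp w \<subseteq> S"
  using reduced_word_exists support_eq_set_reduced_word by (fastforce simp: reduced_word_iff)

lemma in_parabolic_support: "w \<in> carrier G \<Longrightarrow> w \<in> par (supp w)"
  using reduced_word_exists support_eq_set_reduced_word word_eval_in_parabolic
  by (fastforce simp: reduced_word_iff)

lemma support_subset_parabolic: "J \<subseteq> S \<Longrightarrow> w \<in> par J \<Longrightarrow> supp w \<subseteq> J"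
  using reduced_word_letters_in_parabolic reduced_word_exists support_eq_set_reduced_word
    parabolic_closed by metis

lemma support_mult:
  assumes a: "a \<in> carrier G" and b: "b \<in> carrier G" and additive: "len (a \<otimes> b) = len a + len b"
  shows "supp (a \<otimes> b) = supp a \<union> supp b"
proof -
  obtain xs ys where xs: "reduced_word G S xs a" and ys: "reduced_word G S ys b"
    using reduced_word_exists a b by blast
  then have "reduced_word G S (xs @ ys) (a \<otimes> b)"
    using additive word_eval_append[of xs ys] by (auto simp: reduced_word_iff)
  then show ?thesis using support_eq_set_reduced_word xs ys by simp
qed

lemma descent_in_support:
  assumes w: "w \<in> carrier G" and "w \<noteq> \<one>"
  obtains s where "s \<in> supp w" "len (w \<otimes> s) < len w"
proof -
  obtain xs where xs: "reduced_word G S xs w" using reduced_word_exists[OF w] ..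
  then have "xs \<noteq> []" using assms by (auto simp: reduced_word_iff)
  then obtain ys s where ys: "xs = ys @ [s]" by (metis rev_exhaust)
  then have s: "s \<in> S" and ys_S: "ys \<in> lists S" using xs by (auto simp: reduced_word_iff)
  then have "w = ev ys \<otimes> s" using xs ys word_eval_snoc[OF ys_S s] by (simp add: reduced_word_iff)
  then have "w \<otimes> s = ev ys" using ys_S s by simp
  then have "len (w \<otimes> s) < len w" using length_le_word[OF ys_S] xs ys by (simp add: reduced_word_iff)
  moreover have "s \<in> supp w" using support_eq_set_reduced_word[OF xs] ys by simp
  ultimately show ?thesis using that by blast
qed

subsection \<open>Minimal coset representatives\<close>

lemma min_reps_iff: "x \<in> X J \<longleftrightarrow> x \<in> carrier G \<and> (\<forall>s\<in>J. len x < len (x \<otimes> s))"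
  unfolding min_reps_def by auto

lemma one_in_min_reps: "J \<subseteq> S \<Longrightarrow> \<one> \<in> X J"
  unfolding min_reps_iff using length_gen by auto

lemma coset_min_length_exists: "\<exists>y\<in>par J. \<forall>y'\<in>par J. len (w \<otimes> inv y) \<le> len (w \<otimes> inv y')"
  using ex_has_least_nat[of "\<lambda>y. y \<in> par J" \<one> "\<lambda>y. len (w \<otimes> inv y)"] one_in_parabolic by blast

lemma min_coset_length_le:
  assumes J: "J \<subseteq> S" and m: "m \<in> carrier G" and min: "\<forall>z\<in>par J. len m \<le> len (m \<otimes> z)"
    and z: "z \<in> par J" and s: "s \<in> J" and w: "w \<in> carrier G" and eq: "w \<otimes> z = m \<otimes> z \<otimes> s"
  shows "len m \<le> len w"
proof -
  have z_closed: "z \<in> carrier G" and s_closed: "s \<in> carrier G"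
    using parabolic_closed[OF J z] s J by auto
  then have "w = m \<otimes> z \<otimes> s \<otimes> inv z" using eq m w by (simp add: inv_solve_right)
  then have "w = m \<otimes> (z \<otimes> s \<otimes> inv z)" using m z_closed s_closed by (simp add: m_assoc)
  moreover have "z \<otimes> s \<otimes> inv z \<in> par J"
    using parabolic_mult[OF J parabolic_mult[OF J z gen_in_parabolic[OF J s]] parabolic_inv[OF J z]] .
  ultimately show ?thesis using min by simp
qed

text \<open>If the exchange condition deleted a letter of the reduced word of \<open>m\<close>, the coset
  \<open>m W\<^sub>J\<close> would contain an element shorter than \<open>m\<close>; if it deleted a letter of
  \<open>zs\<close>, the word \<open>zs @ [s]\<close> would not be reduced.\<close>

lemma length_mult_min_coset_gen:
  assumes J: "J \<subseteq> S" and m: "m \<in> carrier G" and min: "\<forall>z\<in>par J. len m \<le> len (m \<otimes> z)"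
    and zs: "zs \<in> lists J" and s: "s \<in> J"
    and reduced: "length (zs @ [s]) = len (ev (zs @ [s]))"
    and additive: "len (m \<otimes> ev zs) = len m + length zs"
  shows "len (m \<otimes> ev zs \<otimes> s) = len (m \<otimes> ev zs) + 1"
proof (rule ccontr)
  assume "len (m \<otimes> ev zs \<otimes> s) \<noteq> len (m \<otimes> ev zs) + 1"
  have zs_S: "zs \<in> lists S" and s_S: "s \<in> S" using zs s J by auto
  define z where "z = ev zs"
  have z: "z \<in> carrier G" using zs_S z_def by simp
  obtain xm where xm: "reduced_word G S xm m" using reduced_word_exists[OF m] ..
  then have xm': "xm \<in> lists S" "ev xm = m" "length xm = len m" by (auto simp: reduced_word_iff)
  have "len (m \<otimes> z \<otimes> s) < len (m \<otimes> z)"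
    using length_mult_gen[of "m \<otimes> z" s] m z s_S \<open>len (m \<otimes> ev zs \<otimes> s) \<noteq> _\<close> z_def by auto
  moreover have "xm @ zs \<in> lists S" "length (xm @ zs) = len (ev (xm @ zs))"
    "ev (xm @ zs) = m \<otimes> z"
    using xm' zs_S additive word_eval_append[OF xm'(1) zs_S] z_def by auto
  ultimately obtain a c b where abc: "xm @ zs = a @ c # b" "ev (a @ b) = m \<otimes> z \<otimes> s"
    using exchange_condition[of "xm @ zs" s] s_S by auto
  have abc_S: "a \<in> lists S" "c \<in> S" "b \<in> lists S"
    using abc(1) xm'(1) zs_S by (metis append_in_lists_conv Cons_in_lists_iff)+
  consider (in_m) us where "xm = a @ c # us" "b = us @ zs"
    | (in_z) us where "a = xm @ us" "zs = us @ c # b"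
    using abc(1) by (auto simp: append_eq_append_conv2 append_eq_Cons_conv)
  then show False
  proof cases
    case in_m
    then have us: "us \<in> lists S" using xm'(1) by auto
    have "ev (a @ us) \<otimes> z = m \<otimes> z \<otimes> s"
      using abc(2) in_m(2) word_eval_append[of "a @ us" zs] abc_S us zs_S z_def by simp
    then have "len m \<le> len (ev (a @ us))"
      using min_coset_length_le[OF J m min word_eval_in_parabolic[OF zs] s] abc_S us z_def by simp
    also have "\<dots> \<le> length (a @ us)" using abc_S us by (intro length_le_word) auto
    finally show False using xm'(3) in_m(1) by simp
  next
    case in_z
    then have us: "us \<in> lists S" using zs_S by auto
    have "m \<otimes> ev (us @ b) = m \<otimes> (z \<otimes> s)"
      using abc(2) in_z(1) word_eval_append[of xm "us @ b"] xm' us abc_S m z s_S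
      by (simp add: m_assoc)
    then have "ev (us @ b) = ev (zs @ [s])"
      using m z s_S us abc_S word_eval_snoc[OF zs_S s_S] z_def by simp
    moreover have "len (ev (us @ b)) \<le> length (us @ b)" using us abc_S by (intro length_le_word) auto
    ultimately show False using reduced in_z(2) by simp
  qed
qed

lemma length_mult_min_coset:
  assumes J: "J \<subseteq> S" and m: "m \<in> carrier G" and min: "\<forall>z\<in>par J. len m \<le> len (m \<otimes> z)"
    and z: "z \<in> par J"
  shows "len (m \<otimes> z) = len m + len z"
proof -
  have "len (m \<otimes> ev zs) = len m + length zs"
    if "zs \<in> lists J" "length zs = len (ev zs)" for zs
    using that
  proof (induction zs rule: rev_induct)
    case (snoc s zs)
    then have zs: "zs \<in> lists J" and s: "s \<in> J" by auto
    then have zs_S: "zs \<in> lists S" and s_S: "s \<in> S" using J by auto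
    have "length zs = len (ev zs)"
      using reduced_word_butlast[of zs s] snoc.prems zs_S s_S by simp
    then have "len (m \<otimes> ev zs) = len m + length zs" using snoc.IH zs by simp
    moreover have "m \<otimes> ev (zs @ [s]) = m \<otimes> ev zs \<otimes> s"
      using word_eval_snoc[OF zs_S s_S] m zs_S s_S by (simp add: m_assoc)
    ultimately show ?case
      using length_mult_min_coset_gen[OF J m min zs s snoc.prems(2)] by simp
  qed (use m in simp)
  moreover obtain zs where "set zs \<subseteq> J" "reduced_word G S zs z"
    using reduced_word_in_parabolic[OF J z] by blast
  ultimately show ?thesis by (auto simp: reduced_word_iff)
qed

text \<open>A shortest element \<open>m = x y\<^sub>0\<^sup>-\<^sup>1\<close> of \<open>x W\<^sub>J\<close> has additive lengths with \<open>W\<^sub>J\<close>,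
  so a descent of \<open>y\<^sub>0 \<noteq> 1\<close> would be a descent of \<open>x\<close> in \<open>J\<close>.\<close>

lemma min_reps_length_additive:
  assumes J: "J \<subseteq> S" and x: "x \<in> X J" and y: "y \<in> par J"
  shows "len (x \<otimes> y) = len x + len y"
proof -
  have x_closed: "x \<in> carrier G" using x min_reps_iff by auto
  obtain y0 where y0: "y0 \<in> par J" "\<forall>y'\<in>par J. len (x \<otimes> inv y0) \<le> len (x \<otimes> inv y')"
    using coset_min_length_exists by blast
  have y0_closed: "y0 \<in> carrier G" using parabolic_closed[OF J y0(1)] .
  define m where "m = x \<otimes> inv y0"
  have m: "m \<in> carrier G" using x_closed y0_closed m_def by simp
  have min: "\<forall>z\<in>par J. len m \<le> len (m \<otimes> z)"
  proof
    fix z assume z: "z \<in> par J"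
    then have "m \<otimes> z = x \<otimes> inv (inv z \<otimes> y0)"
      using x_closed y0_closed parabolic_closed[OF J z] by (simp add: m_def inv_mult_group m_assoc)
    moreover have "inv z \<otimes> y0 \<in> par J" using parabolic_mult[OF J parabolic_inv[OF J z] y0(1)] .
    ultimately show "len m \<le> len (m \<otimes> z)" using y0(2) m_def by simp
  qed
  have x_eq: "x = m \<otimes> y0" using x_closed y0_closed m_def by (simp add: m_assoc)
  have "y0 = \<one>"
  proof (rule ccontr)
    assume "y0 \<noteq> \<one>"
    then obtain s where s: "s \<in> supp y0" "len (y0 \<otimes> s) < len y0"
      using descent_in_support[OF y0_closed] by blast
    have sJ: "s \<in> J" using s(1) support_subset_parabolic[OF J y0(1)] by auto
    have y0s: "y0 \<otimes> s \<in> par J" using parabolic_mult[OF J y0(1) gen_in_parabolic[OF J sJ]] .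
    have "len (x \<otimes> s) = len (m \<otimes> (y0 \<otimes> s))" using x_eq m y0_closed sJ J by (auto simp: m_assoc)
    also have "\<dots> = len m + len (y0 \<otimes> s)" using length_mult_min_coset[OF J m min y0s] .
    also have "\<dots> < len m + len y0" using s by simp
    also have "\<dots> = len x" using length_mult_min_coset[OF J m min y0(1)] x_eq by simp
    finally show False using x sJ min_reps_iff by auto
  qed
  then have "m = x" using x_eq m by simp
  then show ?thesis using length_mult_min_coset[OF J m min y] by simp
qed

lemma parabolic_factorization_unique:
  assumes J: "J \<subseteq> S" and x: "x \<in> X J" and x': "x' \<in> X J"
    and y: "y \<in> par J" and y': "y' \<in> par J" and eq: "x \<otimes> y = x' \<otimes> y'"
  shows "y = y'"
proof -
  have closed: "x \<in> carrier G" "x' \<in> carrier G" "y \<in> carrier G" "y' \<in> carrier G"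
    using x x' min_reps_iff parabolic_closed[OF J y] parabolic_closed[OF J y'] by auto
  have "x' = x \<otimes> (y \<otimes> inv y')" "x = x' \<otimes> (y' \<otimes> inv y)"
    using eq closed by (metis inv_solve_right m_assoc inv_closed m_closed)+
  then have "len x' = len x + len (y \<otimes> inv y')" "len x = len x' + len (y' \<otimes> inv y)"
    using min_reps_length_additive[OF J x parabolic_mult[OF J y parabolic_inv[OF J y']]]
      min_reps_length_additive[OF J x' parabolic_mult[OF J y' parabolic_inv[OF J y]]]
    by metis+
  then have "y \<otimes> inv y' = \<one>" using length_eq_0_iff closed by simp
  then show ?thesis using closed by (metis inv_closed inv_inv inv_equality)
qed

lemma parabolic_factorization_exists:
  assumes J: "J \<subseteq> S" and w: "w \<in> carrier G"
  shows "\<exists>y\<in>par J. w \<otimes> inv y \<in> X J"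
proof -
  obtain y where y: "y \<in> par J" "\<forall>y'\<in>par J. len (w \<otimes> inv y) \<le> len (w \<otimes> inv y')"
    using coset_min_length_exists by blast
  have y_closed: "y \<in> carrier G" using parabolic_closed[OF J y(1)] .
  have "len (w \<otimes> inv y) < len (w \<otimes> inv y \<otimes> s)" if sJ: "s \<in> J" for s
  proof -
    have s: "s \<in> S" using sJ J by auto
    have "w \<otimes> inv y \<otimes> s = w \<otimes> inv (s \<otimes> y)" using w y_closed s by (simp add: inv_mult_group m_assoc)
    moreover have "s \<otimes> y \<in> par J" using parabolic_mult[OF J gen_in_parabolic[OF J sJ] y(1)] .
    ultimately have "len (w \<otimes> inv y) \<le> len (w \<otimes> inv y \<otimes> s)" using y(2) by simp
    moreover have "len (w \<otimes> inv y \<otimes> s) \<noteq> len (w \<otimes> inv y)"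
      using length_mult_gen[of "w \<otimes> inv y" s] w y_closed s by auto
    ultimately show ?thesis by simp
  qed
  then show ?thesis using y w y_closed min_reps_iff by auto
qed

lemma par_comp_eq:
  assumes J: "J \<subseteq> S" and x: "x \<in> X J" and y: "y \<in> par J"
  shows "pcomp J (x \<otimes> y) = y"
  unfolding par_comp_def
proof (rule the_equality)
  have closed: "x \<in> carrier G" "y \<in> carrier G" using x min_reps_iff parabolic_closed[OF J y] by auto
  then show "y \<in> par J \<and> x \<otimes> y \<otimes> inv y \<in> X J" using y x by (simp add: m_assoc)
  fix y' assume y': "y' \<in> par J \<and> x \<otimes> y \<otimes> inv y' \<in> X J"
  then have "x \<otimes> y = (x \<otimes> y \<otimes> inv y') \<otimes> y'"
    using closed parabolic_closed[OF J] by (simp add: m_assoc)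
  then show "y' = y" using parabolic_factorization_unique[OF J x _ y, of "x \<otimes> y \<otimes> inv y'" y'] y' by simp
qed

lemma par_comp_of_parabolic: "J \<subseteq> S \<Longrightarrow> y \<in> par J \<Longrightarrow> pcomp J y = y"
  using par_comp_eq[OF _ one_in_min_reps] parabolic_closed by (metis l_one)

lemma parabolic_factorization:
  assumes J: "J \<subseteq> S" and w: "w \<in> carrier G"
  shows "pcomp J w \<in> par J" "pquot J w \<in> X J" "w = pquot J w \<otimes> pcomp J w"
    "len w = len (pquot J w) + len (pcomp J w)"
proof -
  obtain y where y: "y \<in> par J" "w \<otimes> inv y \<in> X J" using parabolic_factorization_exists[OF J w] by blast
  have w_eq: "w = (w \<otimes> inv y) \<otimes> y" using w parabolic_closed[OF J y(1)] by (simp add: m_assoc)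
  then have comp_eq: "pcomp J w = y" using par_comp_eq[OF J y(2) y(1)] by simp
  then show "pcomp J w \<in> par J" "pquot J w \<in> X J" "w = pquot J w \<otimes> pcomp J w"
    using y w_eq unfolding par_quot_def by simp_all
  show "len w = len (pquot J w) + len (pcomp J w)"
    using min_reps_length_additive[OF J y(2) y(1)] comp_eq w_eq unfolding par_quot_def by simp
qed

subsection \<open>The order\<close>

lemma cox_le_factorization:
  assumes "le a b"
  shows "a \<in> carrier G" "b \<in> carrier G" "pquot (supp a) b \<in> X (supp a)"
    "b = pquot (supp a) b \<otimes> a" "supp b = supp (pquot (supp a) b) \<union> supp a"
proof -
  show a: "a \<in> carrier G" and b: "b \<in> carrier G" using assms unfolding cox_le_def by auto
  have comp_eq: "pcomp (supp a) b = a" using assms unfolding cox_le_def by auto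
  note factorization = parabolic_factorization[OF support_subset_gens[OF a] b]
  then show "pquot (supp a) b \<in> X (supp a)" and b_eq: "b = pquot (supp a) b \<otimes> a"
    using comp_eq by simp_all
  have "pquot (supp a) b \<in> carrier G" using factorization(2) min_reps_iff by auto
  then show "supp b = supp (pquot (supp a) b) \<union> supp a"
    using support_mult[OF _ a] factorization(4) comp_eq b_eq by metis
qed

lemma support_mono: "le a b \<Longrightarrow> supp a \<subseteq> supp b"
  using cox_le_factorization(5) by blast

lemma min_reps_mult:
  assumes J: "J \<subseteq> S" and K: "K \<subseteq> J" and z: "z \<in> X J" and p: "p \<in> X K" and p_par: "p \<in> par J"
  shows "z \<otimes> p \<in> X K"
proof -
  have z_closed: "z \<in> carrier G" and p_closed: "p \<in> carrier G" using z p min_reps_iff by auto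
  have "len (z \<otimes> p) < len (z \<otimes> p \<otimes> t)" if t: "t \<in> K" for t
  proof -
    have pt: "p \<otimes> t \<in> par J" using parabolic_mult[OF J p_par gen_in_parabolic[OF J]] t K by auto
    have "len (z \<otimes> p \<otimes> t) = len (z \<otimes> (p \<otimes> t))" using z_closed p_closed t K J by (auto simp: m_assoc)
    also have "\<dots> = len z + len (p \<otimes> t)" using min_reps_length_additive[OF J z pt] .
    finally show ?thesis
      using min_reps_length_additive[OF J z p_par] p t min_reps_iff by auto
  qed
  then show ?thesis using z_closed p_closed min_reps_iff by auto
qed

lemma par_comp_par_comp:
  assumes J: "J \<subseteq> S" and K: "K \<subseteq> J" and w: "w \<in> carrier G"
  shows "pcomp K (pcomp J w) = pcomp K w"
proof -
  have KS: "K \<subseteq> S" using K J by auto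
  note P = parabolic_factorization[OF J w]
  note Q = parabolic_factorization[OF KS parabolic_closed[OF J P(1)]]
  define p where "p = pquot K (pcomp J w)"
  define q where "q = pcomp K (pcomp J w)"
  have q_closed: "q \<in> carrier G" using parabolic_closed[OF KS Q(1)] q_def by simp
  have p_closed: "p \<in> carrier G" using Q(2) min_reps_iff p_def by auto
  have q_par: "q \<in> par J" using parabolic_mono[OF K] Q(1) q_def by auto
  have "pcomp J w \<in> carrier G" using parabolic_closed[OF J P(1)] .
  then have "p = pcomp J w \<otimes> inv q"
    using Q(3) p_closed q_closed by (simp add: p_def q_def inv_solve_right)
  then have p_par: "p \<in> par J" using parabolic_mult[OF J P(1) parabolic_inv[OF J q_par]] by simp
  have zp: "pquot J w \<otimes> p \<in> X K" using min_reps_mult[OF J K P(2) _ p_par] Q(2) p_def by simp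
  have "pquot J w \<in> carrier G" using P(2) min_reps_iff by auto
  then have "w = (pquot J w \<otimes> p) \<otimes> q" using P(3) Q(3) p_def q_def p_closed q_closed by (simp add: m_assoc)
  then show ?thesis using par_comp_eq[OF KS zp Q(1)] q_def by simp
qed

lemma cox_le_par_comp:
  assumes J: "J \<subseteq> S" and K: "K \<subseteq> J" and w: "w \<in> carrier G"
  shows "le (pcomp K w) (pcomp J w)"
proof -
  have KS: "K \<subseteq> S" using K J by auto
  define y where "y = pcomp K w"
  have y_par: "y \<in> par K" using parabolic_factorization(1)[OF KS w] y_def by simp
  then have y_closed: "y \<in> carrier G" using parabolic_closed[OF KS] by blast
  have supp_y: "supp y \<subseteq> K" using support_subset_parabolic[OF KS y_par] .
  have "pcomp (supp y) (pcomp J w) = pcomp (supp y) w"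
    using par_comp_par_comp[OF J _ w] supp_y K by auto
  also have "\<dots> = pcomp (supp y) y"
    using par_comp_par_comp[OF KS supp_y w] y_def by simp
  also have "\<dots> = y"
    using par_comp_of_parabolic[OF support_subset_gens in_parabolic_support] y_closed by blast
  finally show ?thesis
    unfolding cox_le_def y_def
    using y_closed parabolic_closed[OF J parabolic_factorization(1)[OF J w]] y_def by simp
qed

lemma par_comp_le: "J \<subseteq> S \<Longrightarrow> w \<in> carrier G \<Longrightarrow> le (pcomp J w) w"
  using cox_le_par_comp[of S J w] par_comp_of_parabolic[of S w] parabolic_eq_carrier by simp

lemma cox_le_trans:
  assumes ab: "le a b" and bc: "le b c"
  shows "le a c"
proof -
  have c: "c \<in> carrier G" and b: "b \<in> carrier G" using cox_le_factorization bc by auto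
  have "pcomp (supp a) c = pcomp (supp a) (pcomp (supp b) c)"
    using par_comp_par_comp[OF support_subset_gens[OF b] support_mono[OF ab] c] by simp
  also have "\<dots> = a" using ab bc unfolding cox_le_def by simp
  finally show ?thesis using ab c unfolding cox_le_def by simp
qed

subsection \<open>Covers in an interval\<close>

lemma descent_of_min_reps_mult:
  assumes J: "J \<subseteq> S" and y: "y \<in> X J" and q: "q \<in> par J" and s: "s \<in> J"
    and descent: "len (q \<otimes> s) < len q"
  shows "len (y \<otimes> q \<otimes> s) < len (y \<otimes> q)"
proof -
  have qs: "q \<otimes> s \<in> par J" using parabolic_mult[OF J q gen_in_parabolic[OF J s]] .
  have "y \<otimes> q \<otimes> s = y \<otimes> (q \<otimes> s)"
    using y q s J parabolic_closed[OF J q] min_reps_iff by (auto simp: m_assoc)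
  then show ?thesis
    using min_reps_length_additive[OF J y qs] min_reps_length_additive[OF J y q] descent by simp
qed

lemma support_par_comp_insert_descent:
  assumes uv: "le u v" and s: "s \<in> cox_descents G S (pquot (supp u) v)"
  shows "s \<notin> supp u" "supp (pcomp (insert s (supp u)) v) = insert s (supp u)"
proof -
  define I x K where "I = supp u" and "x = pquot I v" and "K = insert s I"
  note UV = cox_le_factorization[OF uv, folded I_def, folded x_def]
  have s_S: "s \<in> S" and descent: "len (x \<otimes> s) < len x"
    using s unfolding x_def I_def cox_descents_def by auto
  have I: "I \<subseteq> S" and K: "K \<subseteq> S" and IK: "I \<subseteq> K"
    using support_subset_gens[OF UV(1)] s_S by (auto simp: I_def K_def)
  show "s \<notin> supp u"
    using UV(3) descent unfolding min_reps_iff I_def by (auto dest: less_asym)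
  note factorization = parabolic_factorization[OF K UV(2)]
  have u: "pcomp I v = u" using uv unfolding cox_le_def I_def by simp
  have "le u (pcomp K v)" using cox_le_par_comp[OF K IK UV(2)] u by simp
  then have "I \<subseteq> supp (pcomp K v)" using support_mono I_def by blast
  moreover have "supp (pcomp K v) \<subseteq> K" using support_subset_parabolic[OF K factorization(1)] .
  moreover have "s \<in> supp (pcomp K v)"
  proof (rule ccontr)
    assume "s \<notin> supp (pcomp K v)"
    then have "supp (pcomp K v) \<subseteq> I" using \<open>supp (pcomp K v) \<subseteq> K\<close> K_def by auto
    then have "pcomp K v \<in> par I"
      using parabolic_mono in_parabolic_support[OF parabolic_closed[OF K factorization(1)]]
      by blast
    then have "pcomp K v = pcomp I (pcomp K v)" using par_comp_of_parabolic[OF I] by simp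
    also have "\<dots> = u" using par_comp_par_comp[OF K IK UV(2)] u by simp
    finally have "x \<otimes> u = pquot K v \<otimes> u" using factorization(3) UV(4) by simp
    then have "x = pquot K v" using UV(1,3) factorization(2) unfolding min_reps_iff by simp
    then show False using factorization(2) descent unfolding min_reps_iff K_def by auto
  qed
  ultimately show "supp (pcomp (insert s (supp u)) v) = insert s (supp u)"
    using I_def K_def by auto
qed

lemma cover_par_comp_insert_descent:
  assumes uv: "le u v" and s: "s \<in> cox_descents G S (pquot (supp u) v)"
  shows "pcomp (insert s (supp u)) v \<in> cox_interval G S u v"
    "cox_covers G S u (pcomp (insert s (supp u)) v)"
proof -
  define I K f where "I = supp u" and "K = insert s I" and "f = pcomp K v"
  note support = support_par_comp_insert_descent[OF uv s]
  have v: "v \<in> carrier G" and u: "u \<in> carrier G" using cox_le_factorization[OF uv] by auto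
  have K: "K \<subseteq> S" and IK: "I \<subseteq> K"
    using support_subset_gens[OF u] s by (auto simp: I_def K_def cox_descents_def)
  have comp_I: "pcomp I v = u" using uv unfolding cox_le_def I_def by simp
  have uf: "le u f" using cox_le_par_comp[OF K IK v] comp_I f_def by simp
  have fv: "le f v" using par_comp_le[OF K v] f_def by simp
  have "f \<noteq> u" using support by (auto simp: f_def K_def I_def)
  have no_between: "\<not> (lt u z \<and> lt z f)" for z
  proof
    assume "lt u z \<and> lt z f"
    then have uz: "le u z" and zf: "le z f" and "z \<noteq> u" "z \<noteq> f"
      unfolding cox_less_def by auto
    have "I \<subseteq> supp z" "supp z \<subseteq> K"
      using support_mono[OF uz] support_mono[OF zf] support(2) by (auto simp: f_def K_def I_def)
    then have "supp z = I \<or> supp z = K" using K_def by auto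
    moreover have "pcomp (supp z) v = z" using cox_le_trans[OF zf fv] unfolding cox_le_def by simp
    ultimately show False using \<open>z \<noteq> u\<close> \<open>z \<noteq> f\<close> comp_I f_def by auto
  qed
  show "f \<in> cox_interval G S u v" using uf fv unfolding cox_interval_def by simp
  show "cox_covers G S u f"
    using uf \<open>f \<noteq> u\<close> no_between unfolding cox_covers_def cox_less_def by auto
qed

lemma cover_eq_par_comp_insert_descent:
  assumes uv: "le u v" and u': "u' \<in> cox_interval G S u v" and cover: "cox_covers G S u u'"
  obtains s where "s \<in> cox_descents G S (pquot (supp u) v)" "u' = pcomp (insert s (supp u)) v"
proof -
  define I J q y where "I = supp u" and "J = supp u'" and "q = pquot I u'" and "y = pquot J v"
  have uu': "le u u'" and u'v: "le u' v" using u' unfolding cox_interval_def by auto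
  note UV = cox_le_factorization[OF uv, folded I_def]
  note UU' = cox_le_factorization[OF uu', folded I_def, folded q_def J_def]
  note U'V = cox_le_factorization[OF u'v, folded J_def, folded y_def]
  have J: "J \<subseteq> S" and IJ: "I \<subseteq> J"
    using support_subset_gens[OF UU'(2)] support_mono[OF uu'] by (auto simp: I_def J_def)
  have q_closed: "q \<in> carrier G" using UU'(3) min_reps_iff by auto
  have "q \<noteq> \<one>" using UU'(1,4) cover unfolding cox_covers_def cox_less_def by auto
  then obtain s where s_q: "s \<in> supp q" and descent: "len (q \<otimes> s) < len q"
    using descent_in_support[OF q_closed] by blast
  have sJ: "s \<in> J" using s_q UU'(5) by auto
  have "q = u' \<otimes> inv u" using UU'(1,4) q_closed by (simp add: inv_solve_right)
  moreover have "u \<in> par J" "u' \<in> par J"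
    using parabolic_mono[OF IJ] in_parabolic_support UU'(1,2) by (auto simp: I_def J_def)
  ultimately have q_par: "q \<in> par J" using parabolic_mult[OF J _ parabolic_inv[OF J]] by metis
  have "y \<otimes> q \<otimes> u = pquot I v \<otimes> u"
    using U'V(4) UU'(4) UV(4) U'V(3) UU'(1) q_closed min_reps_iff by (auto simp: m_assoc)
  then have x: "pquot I v = y \<otimes> q"
    using UU'(1) UV(3) U'V(3) q_closed min_reps_iff by auto
  have s_desc: "s \<in> cox_descents G S (pquot (supp u) v)"
    using descent_of_min_reps_mult[OF J U'V(3) q_par sJ descent] x sJ J
    unfolding cox_descents_def I_def by auto
  define f where "f = pcomp (insert s I) v"
  have "le f u'"
    using cox_le_par_comp[OF J _ UV(2)] IJ sJ u'v unfolding f_def cox_le_def J_def by auto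
  moreover have "lt u f" and "\<not> lt f u'"
    using cover_par_comp_insert_descent[OF uv s_desc] cover
    unfolding f_def I_def cox_covers_def by auto
  ultimately have "u' = f" unfolding cox_less_def by auto
  then show ?thesis using that s_desc f_def I_def by blast
qed

lemma card_covers_in_interval:
  assumes uv: "le u v"
  shows "card {u' \<in> cox_interval G S u v. cox_covers G S u u'}
         = card (cox_descents G S (pquot (supp u) v))"
proof -
  define D f where "D = cox_descents G S (pquot (supp u) v)"
    and "f s = pcomp (insert s (supp u)) v" for s
  have "{u' \<in> cox_interval G S u v. cox_covers G S u u'} = f ` D"
  proof (intro equalityI subsetI)
    fix u' assume "u' \<in> {u' \<in> cox_interval G S u v. cox_covers G S u u'}"
    then obtain s where "s \<in> D" "u' = f s"
      using cover_eq_par_comp_insert_descent[OF uv, of u'] unfolding D_def f_def by auto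
    then show "u' \<in> f ` D" by simp
  next
    fix u' assume "u' \<in> f ` D"
    then show "u' \<in> {u' \<in> cox_interval G S u v. cox_covers G S u u'}"
      using cover_par_comp_insert_descent[OF uv] unfolding D_def f_def by auto
  qed
  moreover have "inj_on f D"
  proof (rule inj_onI)
    fix s s' assume s: "s \<in> D" and s': "s' \<in> D" and "f s = f s'"
    then have "insert s (supp u) = insert s' (supp u)"
      using support_par_comp_insert_descent(2)[OF uv] unfolding D_def f_def by metis
    moreover have "s \<notin> supp u" "s' \<notin> supp u"
      using support_par_comp_insert_descent(1)[OF uv] s s' unfolding D_def by auto
    ultimately show "s = s'" by auto
  qed
  ultimately show ?thesis by (simp add: card_image D_def)
qed

end

theorem mainTheorem11:
  fixes G :: "('a, 'b) monoid_scheme" and S :: "'a set" and u v :: 'a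
  assumes "coxeter_system G S" and "finite S"
    and "cox_less G S u v"
  shows "card {u' \<in> cox_interval G S u v. cox_covers G S u u'}
         = card (cox_descents G S (par_quot G S (cox_support G S u) v))"
proof -
  interpret coxeter G S using coxeter_system_imp_coxeter[OF assms(1)] .
  show ?thesis using card_covers_in_interval[of u v] assms(3) unfolding cox_less_def by simp
qed

end
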